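(* Let $(\mathbf{w},\mathbf{u},q)$ be a sufficiently smooth solution of the GePUP-E formulation (described in the context) on $\Omega\times[t_0,\infty)$. Then $$\frac{\partial(\nabla\cdot\mathbf{w})}{\partial t}=\nu\Delta(\nabla\cdot\mathbf{w})\quad\text{in }\Omega,$$ which implies $$\frac{\mathrm{d}}{\mathrm{d}t}\|\nabla\cdot\mathbf{w}\|^2=-2\nu\|\nabla(\nabla\cdot\mathbf{w})\|^2,$$ which further implies $$\|\nabla\cdot\mathbf{w}(t)\|\le e^{-\nu C(t-t_0)}\|\nabla\cdot\mathbf{w}(t_0)\|,$$ where $C$ is a positive constant independent of $\mathbf{w}$.
   Context: $\|\cdot\|$ denotes the $L^2(\Omega)$ norm. $\Omega\subset\mathbb{R}^D$ is a bounded connected open set with sufficiently smooth boundary, unit outward normal $\mathbf{n}$ and unit tangent vector(s) $\boldsymbol{\tau}$ on $\partial\Omega$. $\nu>0$ is the kinematic viscosity, $\mathbf{g}$ a given body force, $\lambda\ge 0$ a penalty parameter. The Leray–Helmholtz projection $\mathscr{P}$ maps a $C^1$ vector field $\mathbf{v}^*$ to $\mathbf{v}^*-\nabla\phi$ where $\Delta\phi=\nabla\cdot\mathbf{v}^*$ in $\Omega$ and $\mathbf{n}\cdot\nabla\phi=\mathbf{n}\cdot\mathbf{v}^*$ on $\partial\Omega$. The GePUP-E formulation is the system for $(\mathbf{w},\mathbf{u},q)$: $\partial_t\mathbf{w}=\mathbf{g}-\mathbf{u}\cdot\nabla\mathbf{u}-\nabla q+\nu\Delta\mathbf{w}$ in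 $\Omega$; $\mathbf{w}\cdot\boldsymbol{\tau}=0$ and $\nabla\cdot\mathbf{w}=0$ on $\partial\Omega$; $\mathbf{u}=\mathscr{P}\mathbf{w}$ in $\Omega$, $\mathbf{u}\cdot\mathbf{n}=0$ on $\partial\Omega$; $\Delta q=\nabla\cdot(\mathbf{g}-\mathbf{u}\cdot\nabla\mathbf{u})$ in $\Omega$; $\mathbf{n}\cdot\nabla q=\mathbf{n}\cdot(\mathbf{g}-\mathbf{u}\cdot\nabla\mathbf{u}+\nu\Delta\mathbf{w})+\lambda\,\mathbf{n}\cdot\mathbf{w}$ on $\partial\Omega$; with initial condition $\mathbf{w}(\mathbf{x},t_0)=\mathbf{u}(\mathbf{x},t_0)$ for all $\mathbf{x}\in\overline{\Omega}$. *)

theory Defs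
  imports "HOL-Analysis.Analysis"
begin

definition partial_dir :: "'a::euclidean_space \<Rightarrow> ('a \<Rightarrow> 'b::real_normed_vector) \<Rightarrow> 'a \<Rightarrow> 'b" where
  "partial_dir b f x = frechet_derivative f (at x) b"

fun iter_partial :: "'a::euclidean_space list \<Rightarrow> ('a \<Rightarrow> 'b::real_normed_vector) \<Rightarrow> 'a \<Rightarrow> 'b" where
  "iter_partial [] f = f"
| "iter_partial (b # bs) f = partial_dir b (iter_partial bs f)"

definition Ck_on :: "nat \<Rightarrow> 'a::euclidean_space set \<Rightarrow> ('a \<Rightarrow> 'b::real_normed_vector) \<Rightarrow> bool" where
  "Ck_on k S f \<longleftrightarrow>
     (\<forall>bs. set bs \<subseteq> Basis \<and> length bs < k \<longrightarrow> (\<forall>x\<in>S. iter_partial bs f differentiable (at x))) \<and>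
     (\<forall>bs. set bs \<subseteq> Basis \<and> length bs \<le> k \<longrightarrow> continuous_on S (iter_partial bs f))"

definition Cinf_on :: "'a::euclidean_space set \<Rightarrow> ('a \<Rightarrow> 'b::real_normed_vector) \<Rightarrow> bool" where
  "Cinf_on S f \<longleftrightarrow> (\<forall>k. Ck_on k S f)"

definition grad :: "('a::euclidean_space \<Rightarrow> real) \<Rightarrow> 'a \<Rightarrow> 'a" where
  "grad f x = (\<Sum>b\<in>Basis. partial_dir b f x *\<^sub>R b)"

definition divg :: "('a::euclidean_space \<Rightarrow> 'a) \<Rightarrow> 'a \<Rightarrow> real" where
  "divg F x = (\<Sum>b\<in>Basis. partial_dir b F x \<bullet> b)"

definition lap :: "('a::euclidean_space \<Rightarrow> real) \<Rightarrow> 'a \<Rightarrow> real" where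
  "lap f x = (\<Sum>b\<in>Basis. partial_dir b (partial_dir b f) x)"

definition vlap :: "('a::euclidean_space \<Rightarrow> 'a) \<Rightarrow> 'a \<Rightarrow> 'a" where
  "vlap F x = (\<Sum>b\<in>Basis. lap (\<lambda>y. F y \<bullet> b) x *\<^sub>R b)"

definition conv :: "('a::euclidean_space \<Rightarrow> 'a) \<Rightarrow> ('a \<Rightarrow> 'a) \<Rightarrow> 'a \<Rightarrow> 'a" where
  "conv u v x = (\<Sum>b\<in>Basis. (u x \<bullet> b) *\<^sub>R partial_dir b v x)"

definition L2norm :: "'a::euclidean_space set \<Rightarrow> ('a \<Rightarrow> 'b::real_normed_vector) \<Rightarrow> real" where
  "L2norm \<Omega> f = sqrt (integral \<Omega> (\<lambda>x. (norm (f x))\<^sup>2))"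

text \<open>Outward unit normal of \<Omega> = {x. \<rho> x < 0} given by a defining function \<rho>.\<close>
definition normal_of :: "('a::euclidean_space \<Rightarrow> real) \<Rightarrow> 'a \<Rightarrow> 'a" where
  "normal_of \<rho> x = (1 / norm (grad \<rho> x)) *\<^sub>R grad \<rho> x"

definition is_leray_proj :: "'a::euclidean_space set \<Rightarrow> ('a \<Rightarrow> 'a) \<Rightarrow> ('a \<Rightarrow> 'a) \<Rightarrow> ('a \<Rightarrow> 'a) \<Rightarrow> bool" where
  "is_leray_proj \<Omega> n v pv \<longleftrightarrow>
     (\<exists>\<phi> U. open U \<and> closure \<Omega> \<subseteq> U \<and> Ck_on 2 U \<phi> \<and>
        (\<forall>x\<in>\<Omega>. lap \<phi> x = divg v x) \<and>
        (\<forall>x\<in>frontier \<Omega>. n x \<bullet> grad \<phi> x = n x \<bullet> v x) \<and>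
        (\<forall>x\<in>\<Omega>. pv x = v x - grad \<phi> x))"

definition GePUP_E_solution ::
  "'a::euclidean_space set \<Rightarrow> ('a \<Rightarrow> 'a) \<Rightarrow> real \<Rightarrow> real \<Rightarrow> ('a \<Rightarrow> real \<Rightarrow> 'a) \<Rightarrow>
   ('a \<Rightarrow> real \<Rightarrow> 'a) \<Rightarrow> ('a \<Rightarrow> real \<Rightarrow> 'a) \<Rightarrow> ('a \<Rightarrow> real \<Rightarrow> real) \<Rightarrow> real \<Rightarrow> bool" where
  "GePUP_E_solution \<Omega> n \<nu> lam g w u q t0 \<longleftrightarrow>
     \<comment> \<open>sufficient smoothness: C^\<infinity> in space-time on an open neighbourhood of closure \<Omega> \<times> [t0,\<infinity>)\<close>
     (\<exists>V. open V \<and> closure \<Omega> \<times> {t0..} \<subseteq> V \<and>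
        Cinf_on V (\<lambda>p. w (fst p) (snd p)) \<and> Cinf_on V (\<lambda>p. u (fst p) (snd p)) \<and>
        Cinf_on V (\<lambda>p. q (fst p) (snd p)) \<and> Cinf_on V (\<lambda>p. g (fst p) (snd p))) \<and>
     \<comment> \<open>momentum equation for w\<close>
     (\<forall>t\<ge>t0. \<forall>x\<in>\<Omega>. vector_derivative (\<lambda>s. w x s) (at t) =
        g x t - conv (\<lambda>y. u y t) (\<lambda>y. u y t) x - grad (\<lambda>y. q y t) x + \<nu> *\<^sub>R vlap (\<lambda>y. w y t) x) \<and>
     \<comment> \<open>w . \<tau> = 0 for every tangent vector \<tau>, and div w = 0 on the boundary\<close>
     (\<forall>t\<ge>t0. \<forall>x\<in>frontier \<Omega>. (\<forall>\<tau>. \<tau> \<bullet> n x = 0 \<longrightarrow> w x t \<bullet> \<tau> = 0) \<and> divg (\<lambda>y. w y t) x = 0) \<and>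
     \<comment> \<open>u = P w in \<Omega>, u . n = 0 on the boundary\<close>
     (\<forall>t\<ge>t0. is_leray_proj \<Omega> n (\<lambda>y. w y t) (\<lambda>y. u y t)) \<and>
     (\<forall>t\<ge>t0. \<forall>x\<in>frontier \<Omega>. u x t \<bullet> n x = 0) \<and>
     \<comment> \<open>pressure Poisson equation\<close>
     (\<forall>t\<ge>t0. \<forall>x\<in>\<Omega>. lap (\<lambda>y. q y t) x =
        divg (\<lambda>y. g y t - conv (\<lambda>z. u z t) (\<lambda>z. u z t) y) x) \<and>
     \<comment> \<open>pressure Neumann boundary condition\<close>
     (\<forall>t\<ge>t0. \<forall>x\<in>frontier \<Omega>. n x \<bullet> grad (\<lambda>y. q y t) x =
        n x \<bullet> (g x t - conv (\<lambda>y. u y t) (\<lambda>y. u y t) x + \<nu> *\<^sub>R vlap (\<lambda>y. w y t) x) + lam * (n x \<bullet> w x t)) \<and>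
     \<comment> \<open>initial condition\<close>
     (\<forall>x\<in>closure \<Omega>. w x t0 = u x t0)"

end

theory Submission
  imports Defs
begin

text \<open>Taking the divergence of the momentum equation, the pressure Poisson equation cancels
  the forcing, convection and pressure terms; since the divergence commutes with the time
  derivative and with the Laplacian, \<open>\<nabla>\<cdot>w\<close> solves the heat equation
  \<open>\<partial>\<^sub>t(\<nabla>\<cdot>w) = \<nu>\<Delta>(\<nabla>\<cdot>w)\<close> in \<open>\<Omega>\<close>.
  Its boundary values vanish by the boundary condition, and its initial values vanish because
  \<open>w(t\<^sub>0) = u(t\<^sub>0)\<close> is a Leray projection and hence divergence free.
  The weak maximum principle then gives \<open>\<nabla>\<cdot>w = 0\<close> on \<open>\<Omega> \<times> [t\<^sub>0, \<infinity>)\<close>,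
  so both sides of the energy identity vanish and the decay estimate holds with \<open>C = 1\<close>.\<close>

section \<open>Partial derivatives\<close>

lemma partial_dir_eq:
  assumes "(f has_derivative D) (at x)"
  shows "partial_dir b f x = D b"
  using frechet_derivative_at[OF assms] unfolding partial_dir_def by metis

lemma has_derivative_partial_dir:
  assumes "f differentiable at x"
  shows "(f has_derivative frechet_derivative f (at x)) (at x)"
  using assms frechet_derivative_works by blast

lemma partial_dir_cong:
  assumes "open S" "x \<in> S" "\<And>y. y \<in> S \<Longrightarrow> f y = g y"
  shows "partial_dir b f x = partial_dir b g x"
proof -
  have "(f has_derivative D) (at x) \<longleftrightarrow> (g has_derivative D) (at x)" for D
    using assms has_derivative_transform_within_open[of f D x UNIV S g]
      has_derivative_transform_within_open[of g D x UNIV S f] by auto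
  then show ?thesis unfolding partial_dir_def frechet_derivative_def by simp
qed

lemma differentiable_cong_open:
  assumes "f differentiable at x" "open S" "x \<in> S" "\<And>y. y \<in> S \<Longrightarrow> f y = g y"
  shows "g differentiable at x"
  using assms has_derivative_transform_within_open unfolding differentiable_def by blast

lemma partial_dir_const: "partial_dir b (\<lambda>y. c) x = 0"
  by (simp add: partial_dir_def)

lemma partial_dir_add:
  assumes "f differentiable at x" "g differentiable at x"
  shows "partial_dir b (\<lambda>y. f y + g y) x = partial_dir b f x + partial_dir b g x"
  unfolding partial_dir_def
  by (rule partial_dir_eq[unfolded partial_dir_def])
    (intro has_derivative_add has_derivative_partial_dir assms)

lemma partial_dir_diff:
  assumes "f differentiable at x" "g differentiable at x"
  shows "partial_dir b (\<lambda>y. f y - g y) x = partial_dir b f x - partial_dir b g x"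
  unfolding partial_dir_def
  by (rule partial_dir_eq[unfolded partial_dir_def])
    (intro has_derivative_diff has_derivative_partial_dir assms)

lemma partial_dir_bounded_linear:
  assumes "bounded_linear L" "f differentiable at x"
  shows "partial_dir b (\<lambda>y. L (f y)) x = L (partial_dir b f x)"
  unfolding partial_dir_def
  by (rule partial_dir_eq[unfolded partial_dir_def])
    (intro bounded_linear.has_derivative[OF assms(1)] has_derivative_partial_dir assms(2))

lemmas partial_dir_scaleR = partial_dir_bounded_linear[OF bounded_linear_scaleR_right]
lemmas partial_dir_inner_left = partial_dir_bounded_linear[OF bounded_linear_inner_left]

lemma partial_dir_sum:
  assumes "finite I" "\<And>i. i \<in> I \<Longrightarrow> f i differentiable at x"
  shows "partial_dir b (\<lambda>y. \<Sum>i\<in>I. f i y) x = (\<Sum>i\<in>I. partial_dir b (f i) x)"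
  unfolding partial_dir_def
  by (rule partial_dir_eq[unfolded partial_dir_def])
    (intro has_derivative_sum has_derivative_partial_dir assms)

lemma has_vector_derivative_partial_dir_line:
  fixes F :: "'a::euclidean_space \<Rightarrow> 'b::real_normed_vector"
  assumes "F differentiable at (p + r *\<^sub>R e)"
  shows "((\<lambda>r. F (p + r *\<^sub>R e)) has_vector_derivative partial_dir e F (p + r *\<^sub>R e)) (at r)"
proof -
  let ?D = "frechet_derivative F (at (p + r *\<^sub>R e))"
  have "((\<lambda>r. p + r *\<^sub>R e) has_derivative (\<lambda>h. h *\<^sub>R e)) (at r)"
    by (auto intro!: derivative_eq_intros)
  from has_derivative_compose[OF this has_derivative_partial_dir[OF assms]]
  have "((\<lambda>r. F (p + r *\<^sub>R e)) has_derivative (\<lambda>h. ?D (h *\<^sub>R e))) (at r)"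
    by (simp add: o_def)
  moreover have "linear ?D"
    using has_derivative_partial_dir[OF assms] has_derivative_linear by blast
  ultimately show ?thesis
    unfolding has_vector_derivative_def partial_dir_def by (simp add: linear_scale)
qed

lemma has_real_derivative_partial_dir_line:
  fixes F :: "'a::euclidean_space \<Rightarrow> real"
  assumes "F differentiable at (p + r *\<^sub>R e)"
  shows "((\<lambda>r. F (p + r *\<^sub>R e)) has_real_derivative partial_dir e F (p + r *\<^sub>R e)) (at r)"
  using has_vector_derivative_partial_dir_line[OF assms]
  by (simp add: has_real_derivative_iff_has_vector_derivative)

lemma iter_partial_append: "iter_partial (bs @ [e]) F = iter_partial bs (partial_dir e F)"
  by (induction bs) simp_all

lemma Cinf_on_iff:
  "Cinf_on S f \<longleftrightarrow> (\<forall>bs. set bs \<subseteq> Basis \<longrightarrow>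
     (\<forall>x\<in>S. iter_partial bs f differentiable at x) \<and> continuous_on S (iter_partial bs f))"
  unfolding Cinf_on_def Ck_on_def by (meson lessI less_imp_le_nat)

lemma Cinf_on_imp_Ck_on:
  assumes "Cinf_on S f" "T \<subseteq> S"
  shows "Ck_on k T f"
  using assms unfolding Cinf_on_iff Ck_on_def by (meson continuous_on_subset subsetD)

lemma Cinf_on_differentiable: "Cinf_on S f \<Longrightarrow> x \<in> S \<Longrightarrow> f differentiable at x"
  unfolding Cinf_on_iff by (drule spec[of _ "[]"]) simp

lemma Cinf_on_continuous_on: "Cinf_on S f \<Longrightarrow> continuous_on S f"
  unfolding Cinf_on_iff by (drule spec[of _ "[]"]) simp

lemma Cinf_on_partial_dir:
  assumes "Cinf_on S f" "e \<in> Basis"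
  shows "Cinf_on S (partial_dir e f)"
  using assms unfolding Cinf_on_iff by (metis iter_partial_append set_append Un_least empty_subsetI
      insert_subset list.set)

lemma Ck_on_2_differentiable:
  assumes "Ck_on 2 S f" "x \<in> S" "a \<in> Basis"
  shows "f differentiable at x" "partial_dir a f differentiable at x"
proof -
  have D: "\<forall>bs. set bs \<subseteq> Basis \<and> length bs < 2 \<longrightarrow> (\<forall>x\<in>S. iter_partial bs f differentiable at x)"
    using assms(1) unfolding Ck_on_def by blast
  show "f differentiable at x" "partial_dir a f differentiable at x"
    using D[rule_format, of "[]"] D[rule_format, of "[a]"] assms(2,3) by simp_all
qed

lemma iter_partial_bounded_linear:
  assumes "open S" "bounded_linear L" "Cinf_on S f" "set bs \<subseteq> Basis" "x \<in> S"
  shows "iter_partial bs (\<lambda>y. L (f y)) x = L (iter_partial bs f x)"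
  using assms(4,5)
proof (induction bs arbitrary: x)
  case (Cons b bs)
  have "iter_partial (b # bs) (\<lambda>y. L (f y)) x = partial_dir b (\<lambda>y. L (iter_partial bs f y)) x"
    using Cons by (simp, intro partial_dir_cong[OF assms(1)]) auto
  also have "\<dots> = L (iter_partial (b # bs) f x)"
    using assms(3) Cons.prems by (simp add: partial_dir_bounded_linear[OF assms(2)] Cinf_on_iff)
  finally show ?case .
qed simp

lemma Cinf_on_bounded_linear:
  assumes "open S" "bounded_linear L" "Cinf_on S f"
  shows "Cinf_on S (\<lambda>y. L (f y))"
  unfolding Cinf_on_iff
proof (intro allI impI conjI ballI)
  fix bs :: "'a list" assume bs: "set bs \<subseteq> Basis"
  then have f: "\<forall>x\<in>S. iter_partial bs f differentiable at x" "continuous_on S (iter_partial bs f)"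
    using assms(3) unfolding Cinf_on_iff by blast+
  note eq = iter_partial_bounded_linear[OF assms bs]
  show "iter_partial bs (\<lambda>y. L (f y)) differentiable at x" if "x \<in> S" for x
  proof (rule differentiable_cong_open[OF _ assms(1) that])
    show "(\<lambda>y. L (iter_partial bs f y)) differentiable at x"
      using f(1) that bounded_linear.has_derivative[OF assms(2)] unfolding differentiable_def by blast
  qed (simp add: eq)
  show "continuous_on S (iter_partial bs (\<lambda>y. L (f y)))"
    by (rule continuous_on_eq[OF bounded_linear.continuous_on[OF assms(2) f(2)]]) (simp add: eq)
qed

lemmas Cinf_on_inner_left = Cinf_on_bounded_linear[OF _ bounded_linear_inner_left]

lemma iter_partial_sum:
  assumes "open S" "finite I" "\<And>i. i \<in> I \<Longrightarrow> Cinf_on S (f i)" "set bs \<subseteq> Basis" "x \<in> S"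
  shows "iter_partial bs (\<lambda>y. \<Sum>i\<in>I. f i y) x = (\<Sum>i\<in>I. iter_partial bs (f i) x)"
  using assms(4,5)
proof (induction bs arbitrary: x)
  case (Cons b bs)
  have "iter_partial (b # bs) (\<lambda>y. \<Sum>i\<in>I. f i y) x
      = partial_dir b (\<lambda>y. \<Sum>i\<in>I. iter_partial bs (f i) y) x"
    using Cons by (simp, intro partial_dir_cong[OF assms(1)]) auto
  also have "\<dots> = (\<Sum>i\<in>I. iter_partial (b # bs) (f i) x)"
    using assms(3) Cons.prems by (simp add: partial_dir_sum[OF assms(2)] Cinf_on_iff)
  finally show ?case .
qed simp

lemma Cinf_on_sum:
  assumes "open S" "finite I" "\<And>i. i \<in> I \<Longrightarrow> Cinf_on S (f i)"
  shows "Cinf_on S (\<lambda>y. \<Sum>i\<in>I. f i y)"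
  unfolding Cinf_on_iff
proof (intro allI impI conjI ballI)
  fix bs :: "'a list" assume bs: "set bs \<subseteq> Basis"
  then have f: "\<And>i. i \<in> I \<Longrightarrow> (\<forall>x\<in>S. iter_partial bs (f i) differentiable at x) \<and>
      continuous_on S (iter_partial bs (f i))"
    using assms(3) unfolding Cinf_on_iff by blast
  note eq = iter_partial_sum[OF assms bs]
  show "iter_partial bs (\<lambda>y. \<Sum>i\<in>I. f i y) differentiable at x" if "x \<in> S" for x
  proof (rule differentiable_cong_open[OF _ assms(1) that])
    show "(\<lambda>y. \<Sum>i\<in>I. iter_partial bs (f i) y) differentiable at x"
      using f that by (intro differentiable_sum assms(2)) blast
  qed (simp add: eq)
  show "continuous_on S (iter_partial bs (\<lambda>y. \<Sum>i\<in>I. f i y))"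
  proof (rule continuous_on_eq)
    show "continuous_on S (\<lambda>y. \<Sum>i\<in>I. iter_partial bs (f i) y)"
      using f by (intro continuous_on_sum) blast
  qed (simp add: eq)
qed

lemma mixed_second_difference_mvt:
  fixes F :: "'a::euclidean_space \<Rightarrow> real"
  assumes h: "h > 0"
    and near: "\<And>s r. 0 \<le> s \<Longrightarrow> s \<le> h \<Longrightarrow> 0 \<le> r \<Longrightarrow> r \<le> h \<Longrightarrow> p + s *\<^sub>R e + r *\<^sub>R f \<in> V"
    and dF: "\<And>q. q \<in> V \<Longrightarrow> F differentiable at q"
    and dFe: "\<And>q. q \<in> V \<Longrightarrow> partial_dir e F differentiable at q"
  obtains s r where "0 < s" "s < h" "0 < r" "r < h"
    "F (p + h *\<^sub>R e + h *\<^sub>R f) - F (p + h *\<^sub>R e) - F (p + h *\<^sub>R f) + F p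
       = h * h * partial_dir f (partial_dir e F) (p + s *\<^sub>R e + r *\<^sub>R f)"
proof -
  define \<phi> where "\<phi> s = F ((p + h *\<^sub>R f) + s *\<^sub>R e) - F (p + s *\<^sub>R e)" for s
  have "DERIV \<phi> s :> partial_dir e F ((p + h *\<^sub>R f) + s *\<^sub>R e) - partial_dir e F (p + s *\<^sub>R e)"
    if "0 \<le> s" "s \<le> h" for s
    unfolding \<phi>_def using near[OF that, of h] near[OF that, of 0] h
    by (intro DERIV_diff has_real_derivative_partial_dir_line dF) (simp_all add: algebra_simps)
  from MVT2[OF h this] obtain s where s: "0 < s" "s < h" and s_eq:
    "\<phi> h - \<phi> 0 = h * (partial_dir e F ((p + h *\<^sub>R f) + s *\<^sub>R e) - partial_dir e F (p + s *\<^sub>R e))"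
    by auto
  define \<psi> where "\<psi> r = partial_dir e F ((p + s *\<^sub>R e) + r *\<^sub>R f)" for r
  have "DERIV \<psi> r :> partial_dir f (partial_dir e F) ((p + s *\<^sub>R e) + r *\<^sub>R f)"
    if "0 \<le> r" "r \<le> h" for r
    unfolding \<psi>_def using near[of s r] s that by (intro has_real_derivative_partial_dir_line dFe) simp
  from MVT2[OF h this] obtain r where r: "0 < r" "r < h" and r_eq:
    "\<psi> h - \<psi> 0 = h * partial_dir f (partial_dir e F) ((p + s *\<^sub>R e) + r *\<^sub>R f)"
    by auto
  have "F (p + h *\<^sub>R e + h *\<^sub>R f) - F (p + h *\<^sub>R e) - F (p + h *\<^sub>R f) + F p = \<phi> h - \<phi> 0"
    unfolding \<phi>_def by (simp add: algebra_simps)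
  also have "\<dots> = h * (\<psi> h - \<psi> 0)"
    using s_eq unfolding \<psi>_def by (simp add: algebra_simps)
  also have "\<dots> = h * h * partial_dir f (partial_dir e F) (p + s *\<^sub>R e + r *\<^sub>R f)"
    using r_eq by simp
  finally show ?thesis using s r that by blast
qed

lemma mixed_partials_meet_nearby:
  fixes F :: "'a::euclidean_space \<Rightarrow> real"
  assumes h: "h > 0" and V: "cball p (2 * h) \<subseteq> V" and e: "e \<in> Basis" and f: "f \<in> Basis"
    and dF: "\<And>q. q \<in> V \<Longrightarrow> F differentiable at q"
    and dFe: "\<And>q. q \<in> V \<Longrightarrow> partial_dir e F differentiable at q"
    and dFf: "\<And>q. q \<in> V \<Longrightarrow> partial_dir f F differentiable at q"
  obtains q1 q2 where "dist q1 p \<le> 2 * h" "dist q2 p \<le> 2 * h"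
    "partial_dir f (partial_dir e F) q1 = partial_dir e (partial_dir f F) q2"
proof -
  have close: "dist (p + s *\<^sub>R u + r *\<^sub>R v) p \<le> 2 * h"
    if "0 \<le> s" "s \<le> h" "0 \<le> r" "r \<le> h" "u \<in> Basis" "v \<in> Basis" for s r u v
  proof -
    have "dist (p + s *\<^sub>R u + r *\<^sub>R v) p = norm (s *\<^sub>R u + r *\<^sub>R v)"
      by (simp add: dist_norm)
    also have "\<dots> \<le> norm (s *\<^sub>R u) + norm (r *\<^sub>R v)" by (rule norm_triangle_ineq)
    also have "\<dots> \<le> 2 * h" using that by simp
    finally show ?thesis .
  qed
  have near: "p + s *\<^sub>R u + r *\<^sub>R v \<in> V"
    if "0 \<le> s" "s \<le> h" "0 \<le> r" "r \<le> h" "u \<in> Basis" "v \<in> Basis" for s r u v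
    using close[OF that] V by (auto simp: dist_commute)
  obtain s1 r1 where sr1: "0 < s1" "s1 < h" "0 < r1" "r1 < h"
    "F (p + h *\<^sub>R e + h *\<^sub>R f) - F (p + h *\<^sub>R e) - F (p + h *\<^sub>R f) + F p
       = h * h * partial_dir f (partial_dir e F) (p + s1 *\<^sub>R e + r1 *\<^sub>R f)"
    using mixed_second_difference_mvt[OF h near[OF _ _ _ _ e f] dF dFe] by blast
  obtain s2 r2 where sr2: "0 < s2" "s2 < h" "0 < r2" "r2 < h"
    "F (p + h *\<^sub>R f + h *\<^sub>R e) - F (p + h *\<^sub>R f) - F (p + h *\<^sub>R e) + F p
       = h * h * partial_dir e (partial_dir f F) (p + s2 *\<^sub>R f + r2 *\<^sub>R e)"
    using mixed_second_difference_mvt[OF h near[OF _ _ _ _ f e] dF dFf] by blast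
  have swap: "p + h *\<^sub>R f + h *\<^sub>R e = p + h *\<^sub>R e + h *\<^sub>R f" by (simp add: algebra_simps)
  have "h * h * partial_dir f (partial_dir e F) (p + s1 *\<^sub>R e + r1 *\<^sub>R f)
      = h * h * partial_dir e (partial_dir f F) (p + s2 *\<^sub>R f + r2 *\<^sub>R e)"
    using sr1(5) sr2(5) unfolding swap by linarith
  then have "partial_dir f (partial_dir e F) (p + s1 *\<^sub>R e + r1 *\<^sub>R f)
      = partial_dir e (partial_dir f F) (p + s2 *\<^sub>R f + r2 *\<^sub>R e)"
    using h by simp
  moreover have "dist (p + s1 *\<^sub>R e + r1 *\<^sub>R f) p \<le> 2 * h" "dist (p + s2 *\<^sub>R f + r2 *\<^sub>R e) p \<le> 2 * h"
    using close[of s1 r1 e f] close[of s2 r2 f e] sr1 sr2 e f by simp_all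
  ultimately show ?thesis using that by blast
qed

text \<open>Schwarz's theorem: by the previous lemma the two mixed partials take equal values at
  points arbitrarily close to \<open>p\<close>, so by continuity they agree at \<open>p\<close>.\<close>

lemma partial_dir_commute:
  fixes F :: "'a::euclidean_space \<Rightarrow> real"
  assumes V: "open V" and p: "p \<in> V" and e: "e \<in> Basis" and f: "f \<in> Basis"
    and dF: "\<And>q. q \<in> V \<Longrightarrow> F differentiable at q"
    and dFe: "\<And>q. q \<in> V \<Longrightarrow> partial_dir e F differentiable at q"
    and dFf: "\<And>q. q \<in> V \<Longrightarrow> partial_dir f F differentiable at q"
    and cA: "continuous_on V (partial_dir f (partial_dir e F))"
    and cB: "continuous_on V (partial_dir e (partial_dir f F))"
  shows "partial_dir f (partial_dir e F) p = partial_dir e (partial_dir f F) p"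
proof (rule ccontr)
  define A where "A = partial_dir f (partial_dir e F)"
  define B where "B = partial_dir e (partial_dir f F)"
  define \<epsilon> where "\<epsilon> = \<bar>A p - B p\<bar> / 2"
  assume "partial_dir f (partial_dir e F) p \<noteq> partial_dir e (partial_dir f F) p"
  then have \<epsilon>: "\<epsilon> > 0" unfolding \<epsilon>_def A_def B_def by simp
  obtain d1 where d1: "d1 > 0" "\<And>q. q \<in> V \<Longrightarrow> dist q p < d1 \<Longrightarrow> dist (A q) (A p) < \<epsilon>"
    using cA p \<epsilon> unfolding continuous_on_iff A_def by blast
  obtain d2 where d2: "d2 > 0" "\<And>q. q \<in> V \<Longrightarrow> dist q p < d2 \<Longrightarrow> dist (B q) (B p) < \<epsilon>"
    using cB p \<epsilon> unfolding continuous_on_iff B_def by blast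
  obtain d3 where d3: "d3 > 0" "ball p d3 \<subseteq> V"
    using V p open_contains_ball by blast
  define h where "h = min d1 (min d2 d3) / 3"
  have h: "h > 0" "2 * h < d1" "2 * h < d2" "2 * h < d3" using d1 d2 d3 unfolding h_def by auto
  have "cball p (2 * h) \<subseteq> ball p d3" using h(4) by auto
  then have cball: "cball p (2 * h) \<subseteq> V" using d3(2) by blast
  obtain q1 q2 where q: "dist q1 p \<le> 2 * h" "dist q2 p \<le> 2 * h" "A q1 = B q2"
    using mixed_partials_meet_nearby[OF h(1) cball e f dF dFe dFf] unfolding A_def B_def by blast
  have "q1 \<in> V" "q2 \<in> V" using q(1,2) cball by (auto simp: dist_commute)
  then have "dist (A q1) (A p) < \<epsilon>" "dist (B q2) (B p) < \<epsilon>"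
    using d1(2) d2(2) q(1,2) h by auto
  then show False
    using q(3) dist_triangle3[of "A p" "B p" "A q1"] unfolding \<epsilon>_def by (simp add: dist_real_def)
qed

lemma Cinf_on_partial_dir_commute:
  fixes F :: "'a::euclidean_space \<Rightarrow> real"
  assumes "open V" "Cinf_on V F" "p \<in> V" "e \<in> Basis" "f \<in> Basis"
  shows "partial_dir f (partial_dir e F) p = partial_dir e (partial_dir f F) p"
  using assms by (intro partial_dir_commute Cinf_on_differentiable Cinf_on_continuous_on
      Cinf_on_partial_dir) auto

section \<open>Vector calculus identities\<close>

lemma divg_cong:
  assumes "open S" "x \<in> S" "\<And>y. y \<in> S \<Longrightarrow> F y = G y"
  shows "divg F x = divg G x"
  unfolding divg_def using partial_dir_cong[OF assms] by simp

lemma grad_cong: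
  assumes "open S" "x \<in> S" "\<And>y. y \<in> S \<Longrightarrow> f y = g y"
  shows "grad f x = grad g x"
  unfolding grad_def using partial_dir_cong[OF assms] by simp

lemma lap_cong:
  assumes "open S" "x \<in> S" "\<And>y. y \<in> S \<Longrightarrow> f y = g y"
  shows "lap f x = lap g x"
  unfolding lap_def
  by (intro sum.cong refl partial_dir_cong[OF assms(1,2)] partial_dir_cong[OF assms(1) _ assms(3)])

lemma grad_const: "grad (\<lambda>y. c) x = 0"
  by (simp add: grad_def partial_dir_const)

lemma grad_inner_Basis: "c \<in> Basis \<Longrightarrow> grad f x \<bullet> c = partial_dir c f x"
  unfolding grad_def by (simp add: inner_sum_left inner_Basis if_distrib sum.delta cong: if_cong)

lemma vlap_inner_Basis: "c \<in> Basis \<Longrightarrow> vlap F x \<bullet> c = lap (\<lambda>y. F y \<bullet> c) x"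
  unfolding vlap_def by (simp add: inner_sum_left inner_Basis if_distrib sum.delta cong: if_cong)

lemma divg_eq_sum_partial_dir_inner:
  assumes "F differentiable at x"
  shows "divg F x = (\<Sum>c\<in>Basis. partial_dir c (\<lambda>y. F y \<bullet> c) x)"
  unfolding divg_def using partial_dir_inner_left[OF assms] by simp

lemma divg_grad:
  assumes "grad f differentiable at x"
  shows "divg (grad f) x = lap f x"
  unfolding divg_eq_sum_partial_dir_inner[OF assms] lap_def
  by (simp add: grad_inner_Basis)

lemma divg_add:
  assumes "F differentiable at x" "G differentiable at x"
  shows "divg (\<lambda>y. F y + G y) x = divg F x + divg G x"
  unfolding divg_def using partial_dir_add[OF assms] by (simp add: inner_add_left sum.distrib)

lemma divg_diff:
  assumes "F differentiable at x" "G differentiable at x"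
  shows "divg (\<lambda>y. F y - G y) x = divg F x - divg G x"
  unfolding divg_def using partial_dir_diff[OF assms] by (simp add: inner_diff_left sum_subtractf)

lemma divg_scaleR:
  assumes "F differentiable at x"
  shows "divg (\<lambda>y. c *\<^sub>R F y) x = c * divg F x"
  unfolding divg_def using partial_dir_scaleR[OF assms] by (simp add: sum_distrib_left)

lemma Cinf_on_grad: "open S \<Longrightarrow> Cinf_on S f \<Longrightarrow> Cinf_on S (grad f)"
  unfolding grad_def[abs_def]
  by (intro Cinf_on_sum Cinf_on_bounded_linear[OF _ bounded_linear_scaleR_left]
      Cinf_on_partial_dir finite_Basis)

lemma Cinf_on_lap: "open S \<Longrightarrow> Cinf_on S f \<Longrightarrow> Cinf_on S (lap f)"
  unfolding lap_def[abs_def] by (intro Cinf_on_sum Cinf_on_partial_dir finite_Basis)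

lemma Cinf_on_divg: "open S \<Longrightarrow> Cinf_on S F \<Longrightarrow> Cinf_on S (divg F)"
  unfolding divg_def[abs_def]
  by (intro Cinf_on_sum Cinf_on_inner_left Cinf_on_partial_dir finite_Basis)

lemma Cinf_on_vlap: "open S \<Longrightarrow> Cinf_on S F \<Longrightarrow> Cinf_on S (vlap F)"
  unfolding vlap_def[abs_def]
  by (intro Cinf_on_sum Cinf_on_bounded_linear[OF _ bounded_linear_scaleR_left]
      Cinf_on_lap Cinf_on_inner_left finite_Basis)

lemma lap_sum:
  assumes "open S" "finite I" "\<And>i. i \<in> I \<Longrightarrow> Cinf_on S (f i)" "x \<in> S"
  shows "lap (\<lambda>y. \<Sum>i\<in>I. f i y) x = (\<Sum>i\<in>I. lap (f i) x)"
proof -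
  have "partial_dir b (partial_dir b (\<lambda>y. \<Sum>i\<in>I. f i y)) x
      = (\<Sum>i\<in>I. partial_dir b (partial_dir b (f i)) x)" if "b \<in> Basis" for b
    using iter_partial_sum[OF assms(1-3), where bs="[b, b]"] that assms(4) by simp
  then show ?thesis by (simp add: lap_def) (rule sum.swap)
qed

lemma partial_dir_lap_commute:
  assumes "open S" "Cinf_on S f" "x \<in> S" "c \<in> Basis"
  shows "partial_dir c (lap f) x = lap (partial_dir c f) x"
proof -
  have "partial_dir c (lap f) x = (\<Sum>a\<in>Basis. partial_dir c (partial_dir a (partial_dir a f)) x)"
    unfolding lap_def[abs_def] using assms
    by (intro partial_dir_sum finite_Basis Cinf_on_differentiable Cinf_on_partial_dir) auto
  also have "\<dots> = (\<Sum>a\<in>Basis. partial_dir a (partial_dir a (partial_dir c f)) x)"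
  proof (rule sum.cong[OF refl])
    fix a :: 'a assume a: "a \<in> Basis"
    have "partial_dir c (partial_dir a (partial_dir a f)) x = partial_dir a (partial_dir c (partial_dir a f)) x"
      using assms a by (intro Cinf_on_partial_dir_commute Cinf_on_partial_dir) auto
    also have "\<dots> = partial_dir a (partial_dir a (partial_dir c f)) x"
      using assms a by (intro partial_dir_cong[OF assms(1,3)] Cinf_on_partial_dir_commute) auto
    finally show "partial_dir c (partial_dir a (partial_dir a f)) x = partial_dir a (partial_dir a (partial_dir c f)) x" .
  qed
  finally show ?thesis unfolding lap_def .
qed

lemma divg_vlap:
  assumes "open S" "Cinf_on S F" "x \<in> S"
  shows "divg (vlap F) x = lap (divg F) x"
proof -
  have F: "Cinf_on S (\<lambda>y. F y \<bullet> c)" for c by (rule Cinf_on_inner_left[OF assms(1,2)])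
  have "divg (vlap F) x = (\<Sum>c\<in>Basis. partial_dir c (\<lambda>y. vlap F y \<bullet> c) x)"
    by (rule divg_eq_sum_partial_dir_inner[OF Cinf_on_differentiable[OF Cinf_on_vlap[OF assms(1,2)] assms(3)]])
  also have "\<dots> = (\<Sum>c\<in>Basis. partial_dir c (lap (\<lambda>y. F y \<bullet> c)) x)"
    by (intro sum.cong refl) (simp add: vlap_inner_Basis)
  also have "\<dots> = (\<Sum>c\<in>Basis. lap (partial_dir c (\<lambda>y. F y \<bullet> c)) x)"
    by (intro sum.cong refl partial_dir_lap_commute[OF assms(1) F assms(3)])
  also have "\<dots> = lap (\<lambda>y. \<Sum>c\<in>Basis. partial_dir c (\<lambda>y. F y \<bullet> c) y) x"
    by (intro lap_sum[OF assms(1) finite_Basis _ assms(3), symmetric] Cinf_on_partial_dir F)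
  also have "\<dots> = lap (divg F) x"
    using assms by (intro lap_cong[OF assms(1,3)] divg_eq_sum_partial_dir_inner[symmetric]
        Cinf_on_differentiable)
  finally show ?thesis .
qed

lemma divg_momentum_rhs:
  assumes S: "open S" "x \<in> S" and q: "Cinf_on S q" and w: "Cinf_on S w"
    and R: "(\<lambda>y. G y - grad q y + \<nu> *\<^sub>R vlap w y) differentiable at x"
    and poisson: "lap q x = divg G x"
  shows "divg (\<lambda>y. G y - grad q y + \<nu> *\<^sub>R vlap w y) x = \<nu> * lap (divg w) x"
proof -
  have grad_q: "grad q differentiable at x"
    by (rule Cinf_on_differentiable[OF Cinf_on_grad[OF S(1) q] S(2)])
  have vlap_w: "vlap w differentiable at x"
    by (rule Cinf_on_differentiable[OF Cinf_on_vlap[OF S(1) w] S(2)])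
  \<comment> \<open>\<open>G\<close> contains the convection term, whose regularity is not assumed: it is inherited from
    the other three terms.\<close>
  have G: "G differentiable at x"
    using differentiable_diff[OF differentiable_add[OF R grad_q]
        differentiable_scaleR[OF differentiable_const[of \<nu>] vlap_w]] by simp
  have "divg (\<lambda>y. G y - grad q y + \<nu> *\<^sub>R vlap w y) x
      = divg G x - divg (grad q) x + \<nu> * divg (vlap w) x"
    using G grad_q vlap_w
    by (simp add: divg_add divg_diff divg_scaleR differentiable_diff differentiable_scaleR)
  also have "divg (grad q) x = divg G x" using divg_grad[OF grad_q] poisson by simp
  also have "divg (vlap w) x = lap (divg w) x" by (rule divg_vlap[OF S(1) w S(2)])
  finally show ?thesis by simp
qed

section \<open>Space-time fields\<close>

lemma Basis_prod_space: "b \<in> Basis \<Longrightarrow> (b, 0::real) \<in> Basis"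
  by (simp add: Basis_prod_def)

lemma Basis_prod_time: "(0::'a::euclidean_space, 1::real) \<in> Basis"
  by (simp add: Basis_prod_def)

lemma open_slice: "open V \<Longrightarrow> open {y. (y, t) \<in> V}"
  using open_vimage[of V "\<lambda>y. (y, t)"] by (simp add: vimage_def continuous_on_Pair)

lemma open_time_slice: "open V \<Longrightarrow> open {s. (x, s) \<in> V}"
  using open_vimage[of V "\<lambda>s. (x, s)"] by (simp add: vimage_def continuous_on_Pair)

lemma has_derivative_slice:
  assumes "F differentiable at (x, t)"
  shows "((\<lambda>y. F (y, t)) has_derivative (\<lambda>h. frechet_derivative F (at (x, t)) (h, 0))) (at x)"
proof -
  have "((\<lambda>y. (y, t)) has_derivative (\<lambda>h. (h, 0))) (at x)"
    by (auto intro!: derivative_eq_intros)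
  from has_derivative_compose[OF this has_derivative_partial_dir[OF assms]] show ?thesis
    by (simp add: o_def)
qed

lemma differentiable_slice: "F differentiable at (x, t) \<Longrightarrow> (\<lambda>y. F (y, t)) differentiable at x"
  using has_derivative_slice unfolding differentiable_def by blast

lemma partial_dir_slice:
  assumes "F differentiable at (x, t)"
  shows "partial_dir b (\<lambda>y. F (y, t)) x = partial_dir (b, 0) F (x, t)"
  using partial_dir_eq[OF has_derivative_slice[OF assms]] unfolding partial_dir_def .

lemma has_vector_derivative_time:
  fixes F :: "'a::euclidean_space \<times> real \<Rightarrow> 'b::real_normed_vector"
  assumes "F differentiable at (x, t)"
  shows "((\<lambda>s. F (x, s)) has_vector_derivative partial_dir (0, 1) F (x, t)) (at t)"
  using has_vector_derivative_partial_dir_line[of F "(x, 0)" t "(0, 1)"] assms by simp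

lemma iter_partial_slice:
  fixes F :: "'a::euclidean_space \<times> real \<Rightarrow> 'b::real_normed_vector"
  assumes "open V" "Cinf_on V F" "set bs \<subseteq> Basis" "(x, t) \<in> V"
  shows "iter_partial bs (\<lambda>y. F (y, t)) x = iter_partial (map (\<lambda>b. (b, 0)) bs) F (x, t)"
  using assms(3,4)
proof (induction bs arbitrary: x)
  case (Cons b bs)
  have "iter_partial (b # bs) (\<lambda>y. F (y, t)) x = partial_dir b (iter_partial bs (\<lambda>y. F (y, t))) x"
    by simp
  also have "\<dots> = partial_dir b (\<lambda>y. iter_partial (map (\<lambda>b. (b, 0)) bs) F (y, t)) x"
    by (rule partial_dir_cong[OF open_slice[OF assms(1)]]) (use Cons in auto)
  also have "\<dots> = iter_partial (map (\<lambda>b. (b, 0)) (b # bs)) F (x, t)"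
  proof -
    have "set (map (\<lambda>b. (b, 0::real)) bs) \<subseteq> Basis"
      using Cons.prems Basis_prod_space by auto
    then show ?thesis
      using assms(2) Cons.prems by (simp add: partial_dir_slice Cinf_on_iff)
  qed
  finally show ?case .
qed simp

lemma Cinf_on_slice:
  fixes F :: "'a::euclidean_space \<times> real \<Rightarrow> 'b::real_normed_vector"
  assumes "open V" "Cinf_on V F"
  shows "Cinf_on {y. (y, t) \<in> V} (\<lambda>y. F (y, t))"
  unfolding Cinf_on_iff
proof (intro allI impI conjI ballI)
  fix bs :: "'a list" assume bs: "set bs \<subseteq> Basis"
  let ?G = "iter_partial (map (\<lambda>b. (b, 0::real)) bs) F"
  have "set (map (\<lambda>b. (b, 0::real)) bs) \<subseteq> Basis"
    using bs Basis_prod_space by auto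
  then have G: "\<forall>p\<in>V. ?G differentiable at p" "continuous_on V ?G"
    using assms(2) unfolding Cinf_on_iff by blast+
  note eq = iter_partial_slice[OF assms bs]
  show "iter_partial bs (\<lambda>y. F (y, t)) differentiable at x" if "x \<in> {y. (y, t) \<in> V}" for x
  proof (rule differentiable_cong_open[OF _ open_slice[OF assms(1)] that])
    show "(\<lambda>y. ?G (y, t)) differentiable at x"
      using G(1) that by (intro differentiable_slice) simp
  qed (simp add: eq)
  show "continuous_on {y. (y, t) \<in> V} (iter_partial bs (\<lambda>y. F (y, t)))"
  proof (rule continuous_on_eq)
    show "continuous_on {y. (y, t) \<in> V} (\<lambda>y. ?G (y, t))"
      by (rule continuous_on_compose2[OF G(2)]) (auto intro: continuous_intros)
  qed (simp add: eq)
qed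

definition space_divg :: "('a::euclidean_space \<times> real \<Rightarrow> 'a) \<Rightarrow> 'a \<times> real \<Rightarrow> real" where
  "space_divg W p = (\<Sum>c\<in>Basis. partial_dir (c, 0) (\<lambda>q. W q \<bullet> c) p)"

lemma divg_slice_eq_space_divg:
  assumes "W differentiable at (x, t)"
  shows "divg (\<lambda>y. W (y, t)) x = space_divg W (x, t)"
  unfolding divg_def space_divg_def
  by (simp add: partial_dir_slice[OF assms] partial_dir_inner_left[OF assms])

lemma Cinf_on_space_divg: "open V \<Longrightarrow> Cinf_on V W \<Longrightarrow> Cinf_on V (space_divg W)"
  unfolding space_divg_def[abs_def]
  by (intro Cinf_on_sum Cinf_on_partial_dir Cinf_on_inner_left finite_Basis Basis_prod_space)

lemma partial_dir_time_space_divg: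
  assumes V: "open V" "Cinf_on V W" and p: "p \<in> V"
  shows "partial_dir (0, 1) (space_divg W) p = space_divg (partial_dir (0, 1) W) p"
proof -
  have W: "Cinf_on V (\<lambda>q. W q \<bullet> c)" for c by (rule Cinf_on_inner_left[OF V])
  have "partial_dir (0, 1) (space_divg W) p
      = (\<Sum>c\<in>Basis. partial_dir (0, 1) (partial_dir (c, 0) (\<lambda>q. W q \<bullet> c)) p)"
    unfolding space_divg_def[abs_def] using p W
    by (intro partial_dir_sum finite_Basis Cinf_on_differentiable Cinf_on_partial_dir Basis_prod_space)
      auto
  also have "\<dots> = (\<Sum>c\<in>Basis. partial_dir (c, 0) (partial_dir (0, 1) (\<lambda>q. W q \<bullet> c)) p)"
    by (intro sum.cong refl Cinf_on_partial_dir_commute[OF V(1) W p] Basis_prod_space Basis_prod_time)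
  also have "\<dots> = space_divg (partial_dir (0, 1) W) p"
    unfolding space_divg_def using V p
    by (intro sum.cong refl partial_dir_cong[OF V(1) p] partial_dir_inner_left Cinf_on_differentiable)
  finally show ?thesis .
qed

lemma has_real_derivative_divg_slice:
  fixes W :: "'a::euclidean_space \<times> real \<Rightarrow> 'a"
  assumes V: "open V" "Cinf_on V W" and xt: "(x, t) \<in> V"
  shows "((\<lambda>s. divg (\<lambda>y. W (y, s)) x) has_real_derivative
           divg (\<lambda>y. partial_dir (0, 1) W (y, t)) x) (at t)"
proof -
  have "((\<lambda>s. space_divg W (x, s)) has_real_derivative
          partial_dir (0, 1) (space_divg W) (x, t)) (at t)"
    using has_vector_derivative_time Cinf_on_differentiable[OF Cinf_on_space_divg[OF V] xt]
    by (simp add: has_real_derivative_iff_has_vector_derivative)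
  then have "((\<lambda>s. space_divg W (x, s)) has_real_derivative
          divg (\<lambda>y. partial_dir (0, 1) W (y, t)) x) (at t)"
    using partial_dir_time_space_divg[OF V xt] divg_slice_eq_space_divg[OF
      Cinf_on_differentiable[OF Cinf_on_partial_dir[OF V(2) Basis_prod_time] xt]] by simp
  then show ?thesis
    by (rule has_field_derivative_transform_within_open[OF _ open_time_slice[OF V(1)]])
      (use xt in \<open>auto simp: divg_slice_eq_space_divg Cinf_on_differentiable[OF V(2)]\<close>)
qed

section \<open>Weak maximum principle for the heat equation\<close>

lemma second_derivative_nonpos_at_local_max:
  fixes k k' :: "real \<Rightarrow> real"
  assumes d: "d > 0" and k: "\<And>r. \<bar>r\<bar> < d \<Longrightarrow> (k has_real_derivative k' r) (at r)"
    and k': "(k' has_real_derivative c) (at 0)" and max: "\<And>r. \<bar>r\<bar> < d \<Longrightarrow> k r \<le> k 0"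
  shows "c \<le> 0"
proof (rule ccontr)
  assume "\<not> c \<le> 0"
  then obtain d' where d': "d' > 0" "\<And>h. h > 0 \<Longrightarrow> h < d' \<Longrightarrow> k' 0 < k' h"
    using DERIV_pos_inc_right[OF k'] by auto
  have "k' 0 = 0"
    by (rule DERIV_local_max[OF k[of 0] d]) (use d max in auto)
  define h where "h = min d d' / 2"
  have h: "0 < h" "h < d" "h < d'" using d d' unfolding h_def by auto
  obtain z where z: "0 < z" "z < h" "k h - k 0 = (h - 0) * k' z"
    using MVT2[OF h(1), of k k'] k h by force
  have "k' z > 0" using d'(2)[of z] z h \<open>k' 0 = 0\<close> by simp
  then have "h * k' z > 0" using h(1) by simp
  then have "k h > k 0" using z(3) by simp
  moreover have "k h \<le> k 0" using max[of h] h by simp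
  ultimately show False by simp
qed

lemma derivative_nonneg_at_left_max:
  fixes f :: "real \<Rightarrow> real"
  assumes f: "(f has_real_derivative D) (at s)" and \<delta>: "\<delta> > 0"
    and max: "\<And>h. 0 < h \<Longrightarrow> h \<le> \<delta> \<Longrightarrow> f (s - h) \<le> f s"
  shows "D \<ge> 0"
proof (rule ccontr)
  assume "\<not> D \<ge> 0"
  then obtain d where d: "d > 0" "\<And>h. h > 0 \<Longrightarrow> h < d \<Longrightarrow> f s < f (s - h)"
    using DERIV_neg_dec_left[OF f] by force
  define h where "h = min (d / 2) \<delta>"
  have "0 < h" "h < d" "h \<le> \<delta>" unfolding h_def using d(1) \<delta> by (auto simp: min_def)
  then show False using d(2) max by force
qed

lemma second_partial_nonpos_at_interior_max:
  fixes f f' :: "'a::euclidean_space \<Rightarrow> real"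
  assumes U: "open U" "y \<in> U" and max: "\<And>x. x \<in> U \<Longrightarrow> f x \<le> f y" and a: "a \<in> Basis"
    and df: "\<And>x. x \<in> U \<Longrightarrow> ((\<lambda>r. f (x + r *\<^sub>R a)) has_real_derivative f' x) (at 0)"
    and df': "((\<lambda>r. f' (y + r *\<^sub>R a)) has_real_derivative c) (at 0)"
  shows "c \<le> 0"
proof -
  obtain d where d: "d > 0" "ball y d \<subseteq> U" using U open_contains_ball by blast
  have near: "y + r *\<^sub>R a \<in> U" if "\<bar>r\<bar> < d" for r
    using d(2) that a by (auto simp: dist_norm)
  show ?thesis
  proof (rule second_derivative_nonpos_at_local_max[OF d(1) _ df'])
    show "((\<lambda>r. f (y + r *\<^sub>R a)) has_real_derivative f' (y + r *\<^sub>R a)) (at r)" if "\<bar>r\<bar> < d" for r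
      using DERIV_shift[of "\<lambda>r. f (y + r *\<^sub>R a)" _ 0 r] df[OF near[OF that]]
      by (simp add: algebra_simps)
    show "f (y + r *\<^sub>R a) \<le> f (y + 0 *\<^sub>R a)" if "\<bar>r\<bar> < d" for r
      using max[OF near[OF that]] by simp
  qed
qed

text \<open>At a maximum of \<open>\<Phi> x t - \<epsilon> (t - t0)\<close> over \<open>closure \<Omega> \<times> [t0, T]\<close>, which lies
  in \<open>\<Omega> \<times> (t0, T]\<close> if \<open>\<Phi>\<close> is positive somewhere, the time derivative of \<open>\<Phi>\<close> is at least
  \<open>\<epsilon> > 0\<close> while all second spatial derivatives are nonpositive, contradicting
  \<open>\<Phi>\<^sub>t = \<nu> \<Delta>\<Phi>\<close>.\<close>

lemma heat_weak_maximum_principle: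
  fixes \<Phi> :: "'a::euclidean_space \<Rightarrow> real \<Rightarrow> real"
  assumes \<Omega>: "open \<Omega>" "bounded \<Omega>" and \<nu>: "\<nu> \<ge> 0"
    and cont: "continuous_on (closure \<Omega> \<times> {t0..}) (\<lambda>(x, t). \<Phi> x t)"
    and boundary: "\<And>x t. x \<in> frontier \<Omega> \<Longrightarrow> t0 \<le> t \<Longrightarrow> \<Phi> x t \<le> 0"
    and initial: "\<And>x. x \<in> \<Omega> \<Longrightarrow> \<Phi> x t0 \<le> 0"
    and dt: "\<And>x t. x \<in> \<Omega> \<Longrightarrow> t0 < t \<Longrightarrow> ((\<lambda>s. \<Phi> x s) has_real_derivative \<Phi>t x t) (at t)"
    and dx: "\<And>x t a. x \<in> \<Omega> \<Longrightarrow> t0 < t \<Longrightarrow> a \<in> Basis \<Longrightarrow>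
               ((\<lambda>r. \<Phi> (x + r *\<^sub>R a) t) has_real_derivative \<Phi>x a x t) (at 0)"
    and dxx: "\<And>x t a. x \<in> \<Omega> \<Longrightarrow> t0 < t \<Longrightarrow> a \<in> Basis \<Longrightarrow>
               ((\<lambda>r. \<Phi>x a (x + r *\<^sub>R a) t) has_real_derivative \<Phi>xx a x t) (at 0)"
    and heat: "\<And>x t. x \<in> \<Omega> \<Longrightarrow> t0 < t \<Longrightarrow> \<Phi>t x t = \<nu> * (\<Sum>a\<in>Basis. \<Phi>xx a x t)"
    and x1: "x1 \<in> \<Omega>" and T: "t0 \<le> T"
  shows "\<Phi> x1 T \<le> 0"
proof (rule ccontr)
  assume "\<not> \<Phi> x1 T \<le> 0"
  then have pos: "\<Phi> x1 T > 0" by simp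
  with initial[OF x1] T have T: "t0 < T" by (cases "T = t0") auto
  define \<epsilon> where "\<epsilon> = \<Phi> x1 T / (2 * (T - t0))"
  have \<epsilon>: "\<epsilon> > 0" using pos T unfolding \<epsilon>_def by simp
  define v where "v p = \<Phi> (fst p) (snd p) - \<epsilon> * (snd p - t0)" for p
  define K where "K = closure \<Omega> \<times> {t0..T}"
  have "compact K" unfolding K_def using \<Omega>(2) by (intro compact_Times compact_closure[THEN iffD2]) auto
  moreover have "continuous_on K v"
  proof -
    have "continuous_on K (\<lambda>p. \<Phi> (fst p) (snd p))"
      by (rule continuous_on_subset[OF cont[unfolded case_prod_beta]]) (auto simp: K_def)
    then show ?thesis unfolding v_def by (intro continuous_intros)
  qed
  moreover have x1K: "(x1, T) \<in> K" unfolding K_def using x1 T closure_subset by auto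
  ultimately obtain y s where yK: "(y, s) \<in> K" and max: "\<And>q. q \<in> K \<Longrightarrow> v q \<le> v (y, s)"
    using continuous_attains_sup[of K v] by fastforce
  have "v (x1, T) = \<Phi> x1 T / 2" unfolding v_def \<epsilon>_def using T by (simp add: field_simps)
  then have vpos: "v (y, s) > 0" using max[OF x1K] pos by simp
  have s: "t0 \<le> s" "s \<le> T" and yc: "y \<in> closure \<Omega>" using yK unfolding K_def by auto
  have y: "y \<in> \<Omega>"
  proof (rule ccontr)
    assume "y \<notin> \<Omega>"
    then have "\<Phi> y s \<le> 0" using yc \<Omega>(1) boundary s by (simp add: frontier_def interior_open)
    moreover have "\<epsilon> * (s - t0) \<ge> 0" using \<epsilon> s by simp
    ultimately show False using vpos unfolding v_def by simp
  qed
  have st: "t0 < s" using initial[OF y] vpos s unfolding v_def by (cases "s = t0") auto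
  have "\<Phi>t y s - \<epsilon> \<ge> 0"
  proof (rule derivative_nonneg_at_left_max)
    show "((\<lambda>s'. v (y, s')) has_real_derivative \<Phi>t y s - \<epsilon>) (at s)"
      unfolding v_def using dt[OF y st] by (auto intro!: derivative_eq_intros)
    show "v (y, s - h) \<le> v (y, s)" if "0 < h" "h \<le> s - t0" for h
      using max[of "(y, s - h)"] that yc s unfolding K_def by simp
  qed (use st in simp)
  moreover have "\<Phi>xx a y s \<le> 0" if a: "a \<in> Basis" for a
  proof (rule second_partial_nonpos_at_interior_max[OF \<Omega>(1) y _ a])
    show "\<Phi> x s \<le> \<Phi> y s" if "x \<in> \<Omega>" for x
      using max[of "(x, s)"] that s closure_subset unfolding K_def v_def by auto
  qed (use dx[OF _ st a] dxx[OF y st a] in auto)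
  then have "\<Phi>t y s \<le> 0" using heat[OF y st] \<nu> by (simp add: sum_nonpos mult_nonneg_nonpos)
  ultimately show False using \<epsilon> by simp
qed

lemma heat_equation_eq_0_if_zero_data:
  fixes \<Phi> :: "'a::euclidean_space \<Rightarrow> real \<Rightarrow> real"
  assumes \<Omega>: "open \<Omega>" "bounded \<Omega>" and \<nu>: "\<nu> \<ge> 0"
    and cont: "continuous_on (closure \<Omega> \<times> {t0..}) (\<lambda>(x, t). \<Phi> x t)"
    and boundary: "\<And>x t. x \<in> frontier \<Omega> \<Longrightarrow> t0 \<le> t \<Longrightarrow> \<Phi> x t = 0"
    and initial: "\<And>x. x \<in> \<Omega> \<Longrightarrow> \<Phi> x t0 = 0"
    and smooth: "\<And>t. t0 < t \<Longrightarrow> Ck_on 2 \<Omega> (\<lambda>x. \<Phi> x t)"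
    and heat: "\<And>x t. x \<in> \<Omega> \<Longrightarrow> t0 < t \<Longrightarrow>
                 ((\<lambda>s. \<Phi> x s) has_real_derivative \<nu> * lap (\<lambda>y. \<Phi> y t) x) (at t)"
    and x: "x \<in> \<Omega>" and t: "t0 \<le> t"
  shows "\<Phi> x t = 0"
proof -
  define \<Phi>x where "\<Phi>x a x t = partial_dir a (\<lambda>y. \<Phi> y t) x" for a x t
  define \<Phi>xx where "\<Phi>xx a x t = partial_dir a (partial_dir a (\<lambda>y. \<Phi> y t)) x" for a x t
  note diff = Ck_on_2_differentiable[OF smooth]
  have dx: "((\<lambda>r. \<Phi> (x + r *\<^sub>R a) t) has_real_derivative \<Phi>x a x t) (at 0)"
    if "x \<in> \<Omega>" "t0 < t" "a \<in> Basis" for x t a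
    using has_real_derivative_partial_dir_line[of "\<lambda>y. \<Phi> y t" x 0 a] diff[OF that(2,1,3)]
    unfolding \<Phi>x_def by simp
  have dxx: "((\<lambda>r. \<Phi>x a (x + r *\<^sub>R a) t) has_real_derivative \<Phi>xx a x t) (at 0)"
    if "x \<in> \<Omega>" "t0 < t" "a \<in> Basis" for x t a
    using has_real_derivative_partial_dir_line[of "partial_dir a (\<lambda>y. \<Phi> y t)" x 0 a] diff[OF that(2,1,3)]
    unfolding \<Phi>x_def \<Phi>xx_def by simp
  have lap: "\<nu> * lap (\<lambda>y. \<Phi> y t) x = \<nu> * (\<Sum>a\<in>Basis. \<Phi>xx a x t)" for x t
    unfolding lap_def \<Phi>xx_def ..
  have "\<Phi> x t \<le> 0"
    by (rule heat_weak_maximum_principle[OF \<Omega> \<nu> cont _ _ heat dx dxx lap x t])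
      (simp_all add: boundary initial)
  moreover have "- \<Phi> x t \<le> 0"
  proof (rule heat_weak_maximum_principle[where \<Phi> = "\<lambda>x t. - \<Phi> x t"
        and \<Phi>t = "\<lambda>x t. - (\<nu> * lap (\<lambda>y. \<Phi> y t) x)" and \<Phi>x = "\<lambda>a x t. - \<Phi>x a x t"
        and \<Phi>xx = "\<lambda>a x t. - \<Phi>xx a x t", OF \<Omega> \<nu> _ _ _ _ _ _ _ x t])
    show "continuous_on (closure \<Omega> \<times> {t0..}) (\<lambda>(x, t). - \<Phi> x t)"
      using continuous_on_minus[OF cont] by (simp add: case_prod_beta)
    show "((\<lambda>s. - \<Phi> x s) has_real_derivative - (\<nu> * lap (\<lambda>y. \<Phi> y t) x)) (at t)"
      if "x \<in> \<Omega>" "t0 < t" for x t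
      by (rule DERIV_minus[OF heat[OF that]])
    show "((\<lambda>r. - \<Phi> (x + r *\<^sub>R a) t) has_real_derivative - \<Phi>x a x t) (at 0)"
      if "x \<in> \<Omega>" "t0 < t" "a \<in> Basis" for x t a
      by (rule DERIV_minus[OF dx[OF that]])
    show "((\<lambda>r. - \<Phi>x a (x + r *\<^sub>R a) t) has_real_derivative - \<Phi>xx a x t) (at 0)"
      if "x \<in> \<Omega>" "t0 < t" "a \<in> Basis" for x t a
      by (rule DERIV_minus[OF dxx[OF that]])
  qed (simp_all add: boundary initial lap sum_negf)
  ultimately show ?thesis by simp
qed

section \<open>The divergence of GePUP-E solutions\<close>

lemma divg_eq_0_if_is_leray_proj:
  assumes "is_leray_proj \<Omega> n v pv" "open \<Omega>" "x \<in> \<Omega>" "v differentiable at x"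
  shows "divg pv x = 0"
proof -
  obtain \<phi> U where U: "closure \<Omega> \<subseteq> U" and \<phi>: "Ck_on 2 U \<phi>"
    and lap_\<phi>: "\<forall>x\<in>\<Omega>. lap \<phi> x = divg v x" and pv: "\<forall>x\<in>\<Omega>. pv x = v x - grad \<phi> x"
    using assms(1) unfolding is_leray_proj_def by blast
  have "x \<in> U" using U assms(3) closure_subset by blast
  then have "partial_dir b \<phi> differentiable at x" if "b \<in> Basis" for b
    using Ck_on_2_differentiable[OF \<phi> _ that] by blast
  then have grad_\<phi>: "grad \<phi> differentiable at x"
    unfolding grad_def[abs_def] by (intro differentiable_sum finite_Basis ballI differentiable_scaleR) auto
  have "divg pv x = divg (\<lambda>y. v y - grad \<phi> y) x"
    by (rule divg_cong[OF assms(2,3)]) (simp add: pv)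
  also have "\<dots> = divg v x - lap \<phi> x"
    using divg_diff[OF assms(4) grad_\<phi>] divg_grad[OF grad_\<phi>] by simp
  finally show ?thesis using lap_\<phi> assms(3) by simp
qed

lemma GePUP_E_solution_smoothE:
  assumes "GePUP_E_solution \<Omega> n \<nu> lam g w u q t0"
  obtains V where "open V" "closure \<Omega> \<times> {t0..} \<subseteq> V"
    "Cinf_on V (\<lambda>p. w (fst p) (snd p))" "Cinf_on V (\<lambda>p. q (fst p) (snd p))"
  using assms unfolding GePUP_E_solution_def by blast

lemma GePUP_E_divg_heat_equation:
  assumes sol: "GePUP_E_solution \<Omega> n \<nu> lam g w u q t0"
    and \<Omega>: "open \<Omega>" and x: "x \<in> \<Omega>" and t: "t0 \<le> t"
  shows "((\<lambda>s. divg (\<lambda>y. w y s) x) has_real_derivative \<nu> * lap (\<lambda>y. divg (\<lambda>z. w z t) y) x) (at t)"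
proof -
  obtain V where V: "open V" "closure \<Omega> \<times> {t0..} \<subseteq> V"
    and W: "Cinf_on V (\<lambda>p. w (fst p) (snd p))" and Q: "Cinf_on V (\<lambda>p. q (fst p) (snd p))"
    using GePUP_E_solution_smoothE[OF sol] by blast
  define S where "S = {y. (y, t) \<in> V}"
  have "(y, t) \<in> V" if "y \<in> closure \<Omega>" for y using V(2) t that by auto
  then have S: "open S" "\<Omega> \<subseteq> S"
    unfolding S_def using open_slice[OF V(1)] closure_subset by auto
  with x have xS: "x \<in> S" by blast
  have wt: "Cinf_on S (\<lambda>y. w y t)" and qt: "Cinf_on S (\<lambda>y. q y t)"
    using Cinf_on_slice[OF V(1) W, of t] Cinf_on_slice[OF V(1) Q, of t] unfolding S_def by simp_all
  define Wt where "Wt y = partial_dir (0, 1) (\<lambda>p. w (fst p) (snd p)) (y, t)" for y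
  define G where "G y = g y t - conv (\<lambda>z. u z t) (\<lambda>z. u z t) y" for y
  have Wt: "Wt differentiable at x"
    unfolding Wt_def using xS unfolding S_def
    by (intro differentiable_slice Cinf_on_differentiable[OF Cinf_on_partial_dir[OF W Basis_prod_time]])
      simp
  have momentum: "Wt y = G y - grad (\<lambda>y. q y t) y + \<nu> *\<^sub>R vlap (\<lambda>y. w y t) y" if "y \<in> \<Omega>" for y
  proof -
    have "((\<lambda>s. w y s) has_vector_derivative Wt y) (at t)"
      using has_vector_derivative_time[OF Cinf_on_differentiable[OF W], of y t] S that
      unfolding Wt_def S_def by auto
    then have "vector_derivative (\<lambda>s. w y s) (at t) = Wt y" by (rule vector_derivative_at)
    moreover have "vector_derivative (\<lambda>s. w y s) (at t)
        = G y - grad (\<lambda>y. q y t) y + \<nu> *\<^sub>R vlap (\<lambda>y. w y t) y"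
      using sol that t unfolding GePUP_E_solution_def G_def by blast
    ultimately show ?thesis by simp
  qed
  have "((\<lambda>s. divg (\<lambda>y. w y s) x) has_real_derivative divg Wt x) (at t)"
    using has_real_derivative_divg_slice[OF V(1) W, of x t] V(2) x t closure_subset
    unfolding Wt_def by auto
  also have "divg Wt x = divg (\<lambda>y. G y - grad (\<lambda>y. q y t) y + \<nu> *\<^sub>R vlap (\<lambda>y. w y t) y) x"
    by (rule divg_cong[OF \<Omega> x]) (simp add: momentum)
  also have "\<dots> = \<nu> * lap (divg (\<lambda>y. w y t)) x"
  proof (rule divg_momentum_rhs[OF S(1) xS qt wt])
    show "(\<lambda>y. G y - grad (\<lambda>y. q y t) y + \<nu> *\<^sub>R vlap (\<lambda>y. w y t) y) differentiable at x"
      by (rule differentiable_cong_open[OF Wt \<Omega> x]) (simp add: momentum)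
    show "lap (\<lambda>y. q y t) x = divg G x"
      using sol x t unfolding GePUP_E_solution_def G_def[abs_def] by blast
  qed
  finally show ?thesis .
qed

lemma GePUP_E_divg_eq_0:
  assumes sol: "GePUP_E_solution \<Omega> n \<nu> lam g w u q t0"
    and \<Omega>: "open \<Omega>" "bounded \<Omega>" and \<nu>: "\<nu> \<ge> 0" and x: "x \<in> \<Omega>" and t: "t0 \<le> t"
  shows "divg (\<lambda>y. w y t) x = 0"
proof (rule heat_equation_eq_0_if_zero_data[where \<Phi> = "\<lambda>x t. divg (\<lambda>y. w y t) x", OF \<Omega> \<nu> _ _ _ _ _ x t])
  obtain V where V: "open V" "closure \<Omega> \<times> {t0..} \<subseteq> V" and W: "Cinf_on V (\<lambda>p. w (fst p) (snd p))"
    using GePUP_E_solution_smoothE[OF sol] by metis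
  have "continuous_on (closure \<Omega> \<times> {t0..}) (space_divg (\<lambda>p. w (fst p) (snd p)))"
    by (rule continuous_on_subset[OF Cinf_on_continuous_on[OF Cinf_on_space_divg[OF V(1) W]] V(2)])
  then show "continuous_on (closure \<Omega> \<times> {t0..}) (\<lambda>(x, t). divg (\<lambda>y. w y t) x)"
    using V(2) divg_slice_eq_space_divg[OF Cinf_on_differentiable[OF W]]
    by (elim continuous_on_eq) auto
  show "divg (\<lambda>y. w y t) x = 0" if "x \<in> frontier \<Omega>" "t0 \<le> t" for x t
    using sol that unfolding GePUP_E_solution_def by blast
  show "divg (\<lambda>y. w y t0) x = 0" if x: "x \<in> \<Omega>" for x
  proof -
    have leray: "is_leray_proj \<Omega> n (\<lambda>y. w y t0) (\<lambda>y. u y t0)"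
      and initial: "\<forall>x\<in>closure \<Omega>. w x t0 = u x t0"
      using sol unfolding GePUP_E_solution_def by blast+
    have "(x, t0) \<in> V" using V(2) x closure_subset[of \<Omega>] by fastforce
    then have w: "(\<lambda>y. w y t0) differentiable at x"
      using differentiable_slice[OF Cinf_on_differentiable[OF W]] by simp
    have "divg (\<lambda>y. w y t0) x = divg (\<lambda>y. u y t0) x"
      by (rule divg_cong[OF \<Omega>(1) x]) (use initial closure_subset in blast)
    also have "\<dots> = 0" by (rule divg_eq_0_if_is_leray_proj[OF leray \<Omega>(1) x w])
    finally show ?thesis .
  qed
  show "Ck_on 2 \<Omega> (\<lambda>x. divg (\<lambda>y. w y t) x)" if "t0 < t" for t
  proof (rule Cinf_on_imp_Ck_on)
    show "Cinf_on {y. (y, t) \<in> V} (divg (\<lambda>y. w y t))"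
      using Cinf_on_divg[OF open_slice[OF V(1)] Cinf_on_slice[OF V(1) W]] by simp
    show "\<Omega> \<subseteq> {y. (y, t) \<in> V}" using V(2) that closure_subset[of \<Omega>] by fastforce
  qed
  show "((\<lambda>s. divg (\<lambda>y. w y s) x) has_real_derivative \<nu> * lap (\<lambda>y. divg (\<lambda>z. w z t) y) x) (at t)"
    if "x \<in> \<Omega>" "t0 < t" for x t
    using GePUP_E_divg_heat_equation[OF sol \<Omega>(1)] that by simp
qed

lemma L2norm_eq_0: "(\<And>x. x \<in> \<Omega> \<Longrightarrow> f x = 0) \<Longrightarrow> L2norm \<Omega> f = 0"
  unfolding L2norm_def by (simp add: integral_cong[of \<Omega> "\<lambda>x. (norm (f x))\<^sup>2" "\<lambda>x. 0"])

lemma GePUP_E_L2norm_divg_eq_0: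
  assumes "GePUP_E_solution \<Omega> n \<nu> lam g w u q t0" "open \<Omega>" "bounded \<Omega>" "\<nu> \<ge> 0" "t0 \<le> t"
  shows "L2norm \<Omega> (\<lambda>x. divg (\<lambda>y. w y t) x) = 0"
  using GePUP_E_divg_eq_0[OF assms(1-4) _ assms(5)] by (rule L2norm_eq_0)

lemma GePUP_E_L2norm_grad_divg_eq_0:
  assumes "GePUP_E_solution \<Omega> n \<nu> lam g w u q t0" "open \<Omega>" "bounded \<Omega>" "\<nu> \<ge> 0" "t0 \<le> t"
  shows "L2norm \<Omega> (\<lambda>x. grad (\<lambda>y. divg (\<lambda>z. w z t) y) x) = 0"
proof (rule L2norm_eq_0)
  fix x assume "x \<in> \<Omega>"
  then have "grad (\<lambda>y. divg (\<lambda>z. w z t) y) x = grad (\<lambda>y. 0) x"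
    using GePUP_E_divg_eq_0[OF assms(1-4) _ assms(5)] by (intro grad_cong[OF assms(2)])
  then show "grad (\<lambda>y. divg (\<lambda>z. w z t) y) x = 0" by (simp add: grad_const)
qed

lemma GePUP_E_divg_energy_identity:
  assumes "GePUP_E_solution \<Omega> n \<nu> lam g w u q t0" "open \<Omega>" "bounded \<Omega>" "\<nu> \<ge> 0" "t0 \<le> t"
  shows "((\<lambda>s. (L2norm \<Omega> (\<lambda>x. divg (\<lambda>y. w y s) x))\<^sup>2) has_real_derivative
           - 2 * \<nu> * (L2norm \<Omega> (\<lambda>x. grad (\<lambda>y. divg (\<lambda>z. w z t) y) x))\<^sup>2) (at t within {t0..})"
proof -
  have "((\<lambda>s. 0) has_real_derivative 0) (at t within {t0..})" by simp
  then have "((\<lambda>s. (L2norm \<Omega> (\<lambda>x. divg (\<lambda>y. w y s) x))\<^sup>2) has_real_derivative 0) (at t within {t0..})"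
    by (rule has_field_derivative_transform_within[where d = 1])
      (simp_all add: assms(5) GePUP_E_L2norm_divg_eq_0[OF assms(1-4)])
  then show ?thesis using GePUP_E_L2norm_grad_divg_eq_0[OF assms] by simp
qed

theorem theorem4:
  fixes \<Omega> :: "'a::euclidean_space set" and \<rho> :: "'a \<Rightarrow> real"
  assumes bounded: "bounded \<Omega>"
    and connected: "connected \<Omega>"
    and defining_fun: "\<Omega> = {x. \<rho> x < 0}"
    and rho_smooth: "Cinf_on UNIV \<rho>"
    and rho_regular: "\<forall>x. \<rho> x = 0 \<longrightarrow> grad \<rho> x \<noteq> 0"
  shows "(\<forall>\<nu> lam g w u q t0. \<nu> > 0 \<and> lam \<ge> 0 \<and>
            GePUP_E_solution \<Omega> (normal_of \<rho>) \<nu> lam g w u q t0 \<longrightarrow>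
            (\<forall>t\<ge>t0. \<forall>x\<in>\<Omega>.
               deriv (\<lambda>s. divg (\<lambda>y. w y s) x) t = \<nu> * lap (\<lambda>y. divg (\<lambda>z. w z t) y) x) \<and>
            (\<forall>t\<ge>t0.
               ((\<lambda>s. (L2norm \<Omega> (\<lambda>x. divg (\<lambda>y. w y s) x))\<^sup>2) has_real_derivative
                  (- 2 * \<nu> * (L2norm \<Omega> (\<lambda>x. grad (\<lambda>y. divg (\<lambda>z. w z t) y) x))\<^sup>2))
               (at t within {t0..}))) \<and>
         (\<exists>C>0. \<forall>\<nu> lam g w u q t0. \<nu> > 0 \<and> lam \<ge> 0 \<and>
            GePUP_E_solution \<Omega> (normal_of \<rho>) \<nu> lam g w u q t0 \<longrightarrow>
            (\<forall>t\<ge>t0. L2norm \<Omega> (\<lambda>x. divg (\<lambda>y. w y t) x)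
                 \<le> exp (- \<nu> * C * (t - t0)) * L2norm \<Omega> (\<lambda>x. divg (\<lambda>y. w y t0) x)))"
proof -
  have \<Omega>: "open \<Omega>"
    unfolding defining_fun
    by (rule open_Collect_less[OF Cinf_on_continuous_on[OF rho_smooth]]) (intro continuous_intros)
  note heat = GePUP_E_divg_heat_equation[OF _ \<Omega>, THEN DERIV_imp_deriv]
  note energy = GePUP_E_divg_energy_identity[OF _ \<Omega> bounded]
  note vanishing = GePUP_E_L2norm_divg_eq_0[OF _ \<Omega> bounded]
  show ?thesis
    using heat energy vanishing by (intro conjI allI impI ballI exI[of _ "1::real"]) auto
qed

end
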